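(* Let $G$ be a group (finite or infinite), let $F$ be a field of characteristic zero, and let $\mathfrak{S}$ be an $F$-subspace of $F[G]$. Then $\mathfrak{S}$ is a Schur module over $G$ if and only if $\mathfrak{S}$ is closed under the Hadamard product $\circ$ and for every $g\in G$ there exists $\alpha\in\mathfrak{S}$ with $g\in\operatorname{supp}(\alpha)$.
   Context: Elements of $F[G]$ are $\alpha=\sum_{g\in G}\alpha_g g$ with finitely many nonzero $\alpha_g\in F$; $\operatorname{supp}(\alpha)=\{g\in G\mid \alpha_g\neq 0\}$. The Hadamard product is $\alpha\circ\beta=\sum_g\alpha_g\beta_g g$. For finite $C\subseteq G$, $\overline{C}=\sum_{g\in C}g$. A partition $\mathcal{P}$ of $G$ has finite support if every block $C\in\mathcal{P}$ is finite. An $F$-subspace $\mathfrak{S}\subseteq F[G]$ is a Schur module if there is a partition $\mathcal{P}$ of $G$ of finite support such that $\mathfrak{S}=\operatorname{Span}_F\{\overline{C}\mid C\in\mathcal{P}\}$. *)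

theory Defs
  imports Complex_Main "HOL-Library.Disjoint_Sets" "HOL-Library.Function_Algebras"
begin

text \<open>Elements of the group algebra F[G] are represented as finitely supported
  functions G \<Rightarrow> F (the coefficient maps).\<close>

definition group_algebra :: "('g \<Rightarrow> 'f::zero) set" where
  "group_algebra = {\<alpha>. finite {g. \<alpha> g \<noteq> 0}}"

definition supp :: "('g \<Rightarrow> 'f::zero) \<Rightarrow> 'g set" where
  "supp \<alpha> = {g. \<alpha> g \<noteq> 0}"

definition hadamard :: "('g \<Rightarrow> 'f::times) \<Rightarrow> ('g \<Rightarrow> 'f) \<Rightarrow> ('g \<Rightarrow> 'f)" where
  "hadamard \<alpha> \<beta> = (\<lambda>g. \<alpha> g * \<beta> g)"

definition fscale :: "'f::times \<Rightarrow> ('g \<Rightarrow> 'f) \<Rightarrow> ('g \<Rightarrow> 'f)" where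
  "fscale c \<alpha> = (\<lambda>g. c * \<alpha> g)"

text \<open>The element \<open>\<overline>C\<close> = sum of the elements of a finite set C.\<close>
definition class_sum :: "'g set \<Rightarrow> ('g \<Rightarrow> 'f::{zero,one})" where
  "class_sum C = (\<lambda>g. if g \<in> C then 1 else 0)"

definition schur_module :: "('g \<Rightarrow> 'f::field) set \<Rightarrow> bool" where
  "schur_module S \<longleftrightarrow>
     (\<exists>P. partition_on (UNIV :: 'g set) P \<and> (\<forall>C\<in>P. finite C) \<and>
          S = module.span fscale (class_sum ` P))"

end

theory Submission
  imports Defs
begin

text \<open>For a partition \<open>P\<close> into finite blocks, the span of the block sums is the space of finitely
  supported functions that are constant on the blocks, which is visibly closed under the Hadamard
  product. Conversely, let \<open>S\<close> be closed under the Hadamard product. For \<open>\<theta> \<in> S\<close> and \<open>v \<noteq> 0\<close>,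
  the indicator of the level set \<open>\<theta> = v\<close> is a polynomial without constant term in \<open>\<theta>\<close>, so it
  lies in \<open>S\<close>. The class of \<open>g\<close> under the relation ``no element of \<open>S\<close> separates'' is the
  intersection of the level sets through \<open>g\<close> with nonzero value; all of them are contained in
  the finite level set of one \<open>\<gamma> \<in> S\<close> with \<open>\<gamma> g \<noteq> 0\<close>, so finitely many suffice, and the
  indicator of the class is in \<open>S\<close>. These classes form the required partition. Neither the group
  structure of \<open>G\<close> nor the characteristic of \<open>F\<close> plays a role.\<close>

interpretation fscale: module "fscale :: 'f::field \<Rightarrow> ('g \<Rightarrow> 'f) \<Rightarrow> ('g \<Rightarrow> 'f)"
  by unfold_locales (auto simp: fscale_def fun_eq_iff algebra_simps)

lemma fscale_apply [simp]: "fscale c \<alpha> x = c * \<alpha> x"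
  by (simp add: fscale_def)

lemma hadamard_apply [simp]: "hadamard \<alpha> \<beta> x = \<alpha> x * \<beta> x"
  by (simp add: hadamard_def)

lemma class_sum_apply [simp]: "class_sum C x = (if x \<in> C then 1 else 0)"
  by (simp add: class_sum_def)

lemma sum_apply: "sum f A x = (\<Sum>a\<in>A. f a x)"
  by (induct A rule: infinite_finite_induct) auto

lemma supp_class_sum [simp]: "supp (class_sum C :: 'g \<Rightarrow> 'f::zero_neq_one) = C"
  by (simp add: supp_def)

lemma hadamard_class_sum:
  "hadamard (class_sum A) (class_sum B) = (class_sum (A \<inter> B) :: 'g \<Rightarrow> 'f::semiring_1)"
  by (simp add: fun_eq_iff)

abbreviation hadamard_closed :: "('g \<Rightarrow> 'f::times) set \<Rightarrow> bool" where
  "hadamard_closed S \<equiv> \<forall>\<alpha>\<in>S. \<forall>\<beta>\<in>S. hadamard \<alpha> \<beta> \<in> S"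

section \<open>The span of the block sums of a partition\<close>

lemma partition_on_block_eq:
  "partition_on A P \<Longrightarrow> C \<in> P \<Longrightarrow> D \<in> P \<Longrightarrow> x \<in> C \<Longrightarrow> x \<in> D \<Longrightarrow> C = D"
  using partition_onD2 disjointD by blast

definition block_functions :: "'g set set \<Rightarrow> ('g \<Rightarrow> 'f::zero) set" where
  "block_functions P = {\<alpha>. finite (supp \<alpha>) \<and> (\<forall>C\<in>P. \<forall>x\<in>C. \<forall>y\<in>C. \<alpha> x = \<alpha> y)}"

lemma block_functionsI:
  assumes "finite (supp \<alpha>)" "\<And>C x y. C \<in> P \<Longrightarrow> x \<in> C \<Longrightarrow> y \<in> C \<Longrightarrow> \<alpha> x = \<alpha> y"
  shows "\<alpha> \<in> block_functions P"
  unfolding block_functions_def using assms by blast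

lemma block_functionsD:
  assumes "\<alpha> \<in> block_functions P"
  shows block_functions_finite_supp: "finite (supp \<alpha>)"
    and block_functions_const: "C \<in> P \<Longrightarrow> x \<in> C \<Longrightarrow> y \<in> C \<Longrightarrow> \<alpha> x = \<alpha> y"
  using assms unfolding block_functions_def by blast+

lemma block_functions_pointwise:
  assumes \<alpha>: "\<alpha> \<in> block_functions P" and \<beta>: "\<beta> \<in> block_functions P"
    and "f 0 0 = 0"
  shows "(\<lambda>x. f (\<alpha> x) (\<beta> x)) \<in> block_functions P"
proof (rule block_functionsI)
  have "supp (\<lambda>x. f (\<alpha> x) (\<beta> x)) \<subseteq> supp \<alpha> \<union> supp \<beta>"
    using \<open>f 0 0 = 0\<close> by (auto simp: supp_def)
  then show "finite (supp (\<lambda>x. f (\<alpha> x) (\<beta> x)))"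
    using block_functions_finite_supp[OF \<alpha>] block_functions_finite_supp[OF \<beta>]
    by (rule finite_subset[OF _ finite_UnI])
  fix C x y
  assume "C \<in> P" "x \<in> C" "y \<in> C"
  then show "f (\<alpha> x) (\<beta> x) = f (\<alpha> y) (\<beta> y)"
    using block_functions_const[OF \<alpha>] block_functions_const[OF \<beta>] by metis
qed

lemma subspace_block_functions:
  "fscale.subspace (block_functions P :: ('g \<Rightarrow> 'f::field) set)"
proof (rule fscale.subspaceI)
  show "0 \<in> block_functions P"
    by (rule block_functionsI) (simp_all add: supp_def)
next
  fix \<alpha> \<beta> :: "'g \<Rightarrow> 'f"
  assume "\<alpha> \<in> block_functions P" "\<beta> \<in> block_functions P"
  from block_functions_pointwise[OF this, of "(+)"]
  show "\<alpha> + \<beta> \<in> block_functions P"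
    by (simp add: plus_fun_def)
next
  fix c :: 'f and \<alpha> :: "'g \<Rightarrow> 'f"
  assume "\<alpha> \<in> block_functions P"
  from block_functions_pointwise[OF this this, of "\<lambda>a b. c * a"]
  show "fscale c \<alpha> \<in> block_functions P"
    by (simp add: fscale_def)
qed

lemma hadamard_block_functions:
  assumes "\<alpha> \<in> block_functions P" "\<beta> \<in> block_functions P"
  shows "hadamard \<alpha> \<beta> \<in> (block_functions P :: ('g \<Rightarrow> 'f::mult_zero) set)"
  using block_functions_pointwise[OF assms, of "(*)"] by (simp add: hadamard_def)

lemma class_sum_in_block_functions:
  assumes "partition_on UNIV P" "C \<in> P" "finite C"
  shows "class_sum C \<in> (block_functions P :: ('g \<Rightarrow> 'f::zero_neq_one) set)"
proof (rule block_functionsI)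
  show "finite (supp (class_sum C :: 'g \<Rightarrow> 'f))"
    using assms(3) by simp
  fix D x y
  assume "D \<in> P" "x \<in> D" "y \<in> D"
  then have "x \<in> C \<longleftrightarrow> y \<in> C"
    using partition_on_block_eq[OF assms(1) assms(2)] by blast
  then show "class_sum C x = (class_sum C y :: 'f)"
    by simp
qed

lemma block_functions_in_span:
  fixes \<alpha> :: "'g \<Rightarrow> 'f::field"
  assumes P: "partition_on UNIV P" and \<alpha>: "\<alpha> \<in> block_functions P"
  shows "\<alpha> \<in> fscale.span (class_sum ` P)"
proof -
  define Q where "Q = {C\<in>P. C \<inter> supp \<alpha> \<noteq> {}}"
  define c where "c C = \<alpha> (SOME x. x \<in> C)" for C
  have "C \<subseteq> supp \<alpha>" if "C \<in> Q" for C
  proof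
    fix x
    assume "x \<in> C"
    obtain y where "y \<in> C" "\<alpha> y \<noteq> 0"
      using \<open>C \<in> Q\<close> by (auto simp: Q_def supp_def)
    moreover have "\<alpha> x = \<alpha> y"
      using \<open>C \<in> Q\<close> \<open>x \<in> C\<close> \<open>y \<in> C\<close> by (intro block_functions_const[OF \<alpha>]) (auto simp: Q_def)
    ultimately show "x \<in> supp \<alpha>"
      by (simp add: supp_def)
  qed
  then have "Q \<subseteq> Pow (supp \<alpha>)"
    by blast
  then have "finite Q"
    using block_functions_finite_supp[OF \<alpha>] by (simp add: finite_subset)
  have "(\<Sum>C\<in>Q. fscale (c C) (class_sum C)) x = \<alpha> x" for x
  proof -
    obtain C0 where C0: "C0 \<in> P" "x \<in> C0"
      using partition_onD1[OF P] by blast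
    have "C \<in> P \<Longrightarrow> x \<in> C \<longleftrightarrow> C = C0" for C
      using partition_on_block_eq[OF P _ C0(1) _ C0(2)] C0(2) by blast
    then have "(\<Sum>C\<in>Q. fscale (c C) (class_sum C)) x = (\<Sum>C\<in>Q. if C = C0 then c C else 0)"
      unfolding sum_apply by (intro sum.cong) (auto simp: Q_def)
    also have "\<dots> = (if C0 \<in> Q then c C0 else 0)"
      using \<open>finite Q\<close> by (simp add: sum.delta)
    also have "\<dots> = \<alpha> x"
    proof (cases "C0 \<in> Q")
      case True
      have "(SOME y. y \<in> C0) \<in> C0"
        using C0(2) by (rule someI)
      with C0 have "c C0 = \<alpha> x"
        unfolding c_def by (intro block_functions_const[OF \<alpha>])
      with True show ?thesis
        by simp
    next
      case False
      then show ?thesis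
        using C0 by (auto simp: Q_def supp_def)
    qed
    finally show ?thesis .
  qed
  then have "\<alpha> = (\<Sum>C\<in>Q. fscale (c C) (class_sum C))"
    by auto
  also have "\<dots> \<in> fscale.span (class_sum ` P)"
    by (intro fscale.span_sum fscale.span_scale fscale.span_base) (auto simp: Q_def)
  finally show ?thesis .
qed

lemma span_class_sum_partition:
  assumes "partition_on UNIV P" "\<forall>C\<in>P. finite C"
  shows "fscale.span (class_sum ` P) = (block_functions P :: ('g \<Rightarrow> 'f::field) set)"
  using assms
  by (intro fscale.span_subspace subspace_block_functions)
     (auto intro: class_sum_in_block_functions block_functions_in_span)

lemma schur_module_imp_hadamard_closed:
  fixes S :: "('g \<Rightarrow> 'f::field) set"
  assumes "schur_module S"
  shows "hadamard_closed S \<and> (\<forall>g. \<exists>\<alpha>\<in>S. g \<in> supp \<alpha>)"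
proof -
  obtain P where P: "partition_on UNIV P" "\<forall>C\<in>P. finite C" and S: "S = fscale.span (class_sum ` P)"
    using assms unfolding schur_module_def by blast
  have "\<exists>\<alpha>\<in>S. g \<in> supp \<alpha>" for g
  proof -
    obtain C where "C \<in> P" "g \<in> C"
      using partition_onD1[OF P(1)] by blast
    then show ?thesis
      unfolding S by (intro bexI[of _ "class_sum C"] fscale.span_base) auto
  qed
  moreover have "hadamard_closed (block_functions P :: ('g \<Rightarrow> 'f) set)"
    using hadamard_block_functions by blast
  ultimately show ?thesis
    unfolding S span_class_sum_partition[OF P] by blast
qed

section \<open>Subspaces closed under the Hadamard product\<close>

lemma hadamard_closed_times_prod_diff:
  fixes S :: "('g \<Rightarrow> 'f::field) set"
  assumes S: "fscale.subspace S" "hadamard_closed S" and "\<theta> \<in> S" "finite W"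
  shows "(\<lambda>x. \<theta> x * (\<Prod>w\<in>W. \<theta> x - w)) \<in> S"
  using \<open>finite W\<close>
proof (induction W rule: finite_induct)
  case empty
  then show ?case
    using \<open>\<theta> \<in> S\<close> by simp
next
  case (insert w W)
  let ?p = "\<lambda>x. \<theta> x * (\<Prod>w\<in>W. \<theta> x - w)"
  have "hadamard ?p \<theta> + fscale (- w) ?p \<in> S"
    using S insert.IH \<open>\<theta> \<in> S\<close> by (intro fscale.subspace_add fscale.subspace_scale) auto
  moreover have "hadamard ?p \<theta> + fscale (- w) ?p = (\<lambda>x. \<theta> x * (\<Prod>w\<in>insert w W. \<theta> x - w))"
    using insert.hyps by (simp add: fun_eq_iff algebra_simps)
  ultimately show ?case
    by simp
qed

lemma hadamard_closed_class_sum_level_set: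
  fixes S :: "('g \<Rightarrow> 'f::field) set"
  assumes S: "fscale.subspace S" "hadamard_closed S"
    and \<theta>: "\<theta> \<in> S" "finite (supp \<theta>)" and "v \<noteq> 0"
  shows "class_sum {x. \<theta> x = v} \<in> S"
proof -
  define W where "W = range \<theta> - {v}"
  have "range \<theta> \<subseteq> insert 0 (\<theta> ` supp \<theta>)"
    by (auto simp: supp_def)
  then have "finite W"
    using \<theta>(2) unfolding W_def by (meson finite_Diff finite_imageI finite_insert finite_subset)
  define c where "c = v * (\<Prod>w\<in>W. v - w)"
  have "c \<noteq> 0"
    using \<open>v \<noteq> 0\<close> \<open>finite W\<close> by (auto simp: c_def W_def)
  \<comment> \<open>the polynomial \<open>t * \<Prod>(t - w) / c\<close> is \<open>1\<close> at \<open>v\<close> and vanishes on the other values of \<open>\<theta>\<close>\<close>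
  have "class_sum {x. \<theta> x = v} = fscale (1 / c) (\<lambda>x. \<theta> x * (\<Prod>w\<in>W. \<theta> x - w))"
  proof
    fix x
    show "class_sum {x. \<theta> x = v} x = fscale (1 / c) (\<lambda>x. \<theta> x * (\<Prod>w\<in>W. \<theta> x - w)) x"
    proof (cases "\<theta> x = v")
      case True
      then show ?thesis
        using \<open>c \<noteq> 0\<close> by (simp add: c_def)
    next
      case False
      then have "(\<Prod>w\<in>W. \<theta> x - w) = 0"
        using \<open>finite W\<close> by (auto simp: W_def)
      then show ?thesis
        using False by simp
    qed
  qed
  also have "\<dots> \<in> S"
    using hadamard_closed_times_prod_diff[OF S \<theta>(1) \<open>finite W\<close>] S(1) by (rule fscale.subspace_scale[rotated])
  finally show ?thesis .
qed

lemma hadamard_closed_class_sum_Inter: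
  fixes S :: "('g \<Rightarrow> 'f::semiring_1) set"
  assumes "hadamard_closed S" "finite \<A>" "\<A> \<noteq> {}" "\<forall>A\<in>\<A>. class_sum A \<in> S"
  shows "class_sum (\<Inter>\<A>) \<in> S"
  using assms(2-4)
proof (induction \<A> rule: finite_ne_induct)
  case (singleton A)
  then show ?case
    by simp
next
  case (insert A \<A>)
  have "class_sum (\<Inter>(insert A \<A>)) = (hadamard (class_sum A) (class_sum (\<Inter>\<A>)) :: 'g \<Rightarrow> 'f)"
    by (simp add: hadamard_class_sum)
  also have "\<dots> \<in> S"
    using assms(1) insert.IH insert.prems by blast
  finally show ?case .
qed

lemma Inter_finite_subfamily:
  assumes "finite E" "E \<in> \<A>"
  obtains \<B> where "\<B> \<subseteq> \<A>" "finite \<B>" "\<B> \<noteq> {}" "\<Inter>\<B> = \<Inter>\<A>"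
proof -
  have "\<forall>h\<in>E - \<Inter>\<A>. \<exists>A\<in>\<A>. h \<notin> A"
    by blast
  then obtain B where B: "\<And>h. h \<in> E - \<Inter>\<A> \<Longrightarrow> B h \<in> \<A> \<and> h \<notin> B h"
    by metis
  show ?thesis
  proof
    show "insert E (B ` (E - \<Inter>\<A>)) \<subseteq> \<A>" "finite (insert E (B ` (E - \<Inter>\<A>)))"
      using B assms by auto
    show "\<Inter>(insert E (B ` (E - \<Inter>\<A>))) = \<Inter>\<A>"
      using B assms(2) by blast
  qed simp
qed

lemma hadamard_closed_class_sum_inseparable:
  fixes S :: "('g \<Rightarrow> 'f::field) set"
  assumes S: "fscale.subspace S" "hadamard_closed S"
    and fin: "\<And>\<alpha>. \<alpha> \<in> S \<Longrightarrow> finite (supp \<alpha>)"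
    and \<gamma>: "\<gamma> \<in> S" "\<gamma> g \<noteq> 0"
  shows "class_sum {x. \<forall>\<alpha>\<in>S. \<alpha> x = \<alpha> g} \<in> S"
proof -
  define level where "level \<beta> = {x. \<beta> x = \<beta> g}" for \<beta> :: "'g \<Rightarrow> 'f"
  define \<A> where "\<A> = level ` {\<beta>\<in>S. \<beta> g \<noteq> 0}"
  have inseparable_eq: "{x. \<forall>\<alpha>\<in>S. \<alpha> x = \<alpha> g} = \<Inter>\<A>"
  proof (intro equalityI subsetI)
    fix x
    assume x: "x \<in> \<Inter>\<A>"
    have "\<beta> x = \<beta> g" if "\<beta> \<in> S" for \<beta>
    proof (cases "\<beta> g = 0")
      case True
      \<comment> \<open>\<open>\<beta>\<close> itself is not in \<open>\<A>\<close>, but \<open>\<beta> + \<gamma>\<close> and \<open>\<gamma>\<close> are\<close>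
      have "\<beta> + \<gamma> \<in> S"
        using S(1) \<open>\<beta> \<in> S\<close> \<gamma>(1) by (rule fscale.subspace_add)
      with True \<gamma> have "level (\<beta> + \<gamma>) \<in> \<A>" "level \<gamma> \<in> \<A>"
        by (auto simp: \<A>_def)
      with x have "x \<in> level (\<beta> + \<gamma>)" "x \<in> level \<gamma>"
        by blast+
      then show ?thesis
        by (simp add: level_def)
    next
      case False
      with that have "level \<beta> \<in> \<A>"
        by (auto simp: \<A>_def)
      with x show ?thesis
        by (auto simp: level_def)
    qed
    then show "x \<in> {x. \<forall>\<alpha>\<in>S. \<alpha> x = \<alpha> g}"
      by blast
  qed (auto simp: \<A>_def level_def)
  have "level \<gamma> \<subseteq> supp \<gamma>"
    using \<gamma>(2) by (auto simp: level_def supp_def)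
  then have "finite (level \<gamma>)"
    using fin[OF \<gamma>(1)] by (rule finite_subset)
  moreover have "level \<gamma> \<in> \<A>"
    using \<gamma> by (simp add: \<A>_def)
  ultimately obtain \<B> where \<B>: "\<B> \<subseteq> \<A>" "finite \<B>" "\<B> \<noteq> {}" "\<Inter>\<B> = \<Inter>\<A>"
    by (rule Inter_finite_subfamily)
  have "class_sum A \<in> S" if "A \<in> \<A>" for A
    using that fin by (auto simp: \<A>_def level_def intro: hadamard_closed_class_sum_level_set[OF S])
  with \<B>(1) have "\<forall>A\<in>\<B>. class_sum A \<in> S"
    by blast
  from hadamard_closed_class_sum_Inter[OF S(2) \<B>(2,3) this] show ?thesis
    unfolding inseparable_eq \<B>(4) .
qed

lemma hadamard_closed_imp_schur_module:
  fixes S :: "('g \<Rightarrow> 'f::field) set"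
  assumes "S \<subseteq> group_algebra" "fscale.subspace S" "hadamard_closed S"
    and cover: "\<forall>g. \<exists>\<alpha>\<in>S. g \<in> supp \<alpha>"
  shows "schur_module S"
proof -
  have fin: "\<And>\<alpha>. \<alpha> \<in> S \<Longrightarrow> finite (supp \<alpha>)"
    using assms(1) by (auto simp: group_algebra_def supp_def)
  define r where "r = {(x, y). \<forall>\<alpha>\<in>S. \<alpha> x = \<alpha> y}"
  define P where "P = UNIV // r"
  have r: "equiv UNIV r"
    by (auto simp: r_def equiv_def refl_on_def sym_def trans_def)
  then have P: "partition_on UNIV P"
    unfolding P_def by (rule partition_on_quotient)
  have blocks: "finite C \<and> class_sum C \<in> S" if "C \<in> P" for C
  proof -
    obtain g where "C = r``{g}"
      using \<open>C \<in> P\<close> unfolding P_def by (rule quotientE)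
    then have g: "C = {x. \<forall>\<alpha>\<in>S. \<alpha> x = \<alpha> g}"
      by (auto simp: r_def)
    obtain \<gamma> where \<gamma>: "\<gamma> \<in> S" "\<gamma> g \<noteq> 0"
      using cover by (auto simp: supp_def)
    have "C \<subseteq> supp \<gamma>"
      using g \<gamma> by (auto simp: supp_def)
    then show ?thesis
      using fin[OF \<gamma>(1)] hadamard_closed_class_sum_inseparable[OF assms(2,3) fin \<gamma>] g
      by (auto intro: finite_subset)
  qed
  have "S \<subseteq> block_functions P"
  proof
    fix \<alpha>
    assume "\<alpha> \<in> S"
    show "\<alpha> \<in> block_functions P"
    proof (rule block_functionsI)
      show "finite (supp \<alpha>)"
        using \<open>\<alpha> \<in> S\<close> by (rule fin)
      fix C x y
      assume "C \<in> P" "x \<in> C" "y \<in> C"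
      then have "(x, y) \<in> r"
        using in_quotient_imp_in_rel[OF r] unfolding P_def by blast
      with \<open>\<alpha> \<in> S\<close> show "\<alpha> x = \<alpha> y"
        by (simp add: r_def)
    qed
  qed
  then have "S = fscale.span (class_sum ` P)"
    using assms(2) P blocks
    by (intro fscale.span_subspace[symmetric]) (auto intro: block_functions_in_span)
  with P blocks show ?thesis
    unfolding schur_module_def by blast
qed

theorem theorem2p7:
  fixes S :: "('g::group_add \<Rightarrow> 'f::field_char_0) set"
  assumes "S \<subseteq> group_algebra"
    and "module.subspace fscale S"
  shows "schur_module S \<longleftrightarrow>
           (\<forall>\<alpha>\<in>S. \<forall>\<beta>\<in>S. hadamard \<alpha> \<beta> \<in> S) \<and>
           (\<forall>g. \<exists>\<alpha>\<in>S. g \<in> supp \<alpha>)"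
  using schur_module_imp_hadamard_closed hadamard_closed_imp_schur_module[OF assms] by blast

end
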